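(* Let $1<\alpha<2$, let $k_0\ge 3$ be an integer, and for $j\in\mathbb{Z}$ let $c_j=(-1)^j\Gamma(\alpha+1)/[\Gamma(\alpha/2-j+1)\Gamma(\alpha/2+j+1)]$. Then $$\frac{\left(1-\frac{1+\alpha}{5+\alpha/2}\right)^{5+\alpha/2}e^{\alpha+1}\Gamma(\alpha+1)\sin(\pi\alpha/2)}{\pi\alpha\,(k_0+1/2)^{\alpha}}<\sum_{j=k_0+1}^{\infty}|c_j|<\frac{\sqrt{2}\,e^{13/12}\,\Gamma(\alpha+1)\sin(\pi\alpha/2)}{\pi\alpha\,(k_0-1)^{\alpha}}.$$
   Context: $\Gamma$ denotes the Euler gamma function (with $1/\Gamma$ taken to be $0$ at poles). *)

theory Defs
  imports "HOL-Analysis.Analysis"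
begin

text \<open>Coefficients c_j = (-1)^j Gamma(alpha+1) / (Gamma(alpha/2-j+1) Gamma(alpha/2+j+1)),
  with 1/Gamma taken to be 0 at poles (rGamma is the reciprocal Gamma function).\<close>
definition frac_coeff :: "real \<Rightarrow> int \<Rightarrow> real" where
  "frac_coeff \<alpha> j = (-1) powi j * Gamma (\<alpha> + 1)
      * rGamma (\<alpha>/2 - of_int j + 1) * rGamma (\<alpha>/2 + of_int j + 1)"

end

theory Submission imports Defs "HOL-Real_Asymp.Real_Asymp" begin

text \<open>By the reflection formula, |c_j| = \<Gamma>(\<alpha>+1) sin(\<pi>\<alpha>/2)/\<pi> \<cdot> \<Gamma>(j-\<alpha>/2)/\<Gamma>(j+1+\<alpha>/2) for j \<ge> 1,
  and this is \<Gamma>(\<alpha>+1) sin(\<pi>\<alpha>/2)/(\<pi>\<alpha>) times the difference R(j) - R(j+1) of consecutive values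
  of R(x) = \<Gamma>(x-\<alpha>/2)/\<Gamma>(x+\<alpha>/2). Since R(x) \<rightarrow> 0 the tail telescopes to a multiple of R(k0 + 1),
  and Wendel's inequality, a consequence of the log-convexity of \<Gamma>, traps R(x) between
  1/(x+\<alpha>/2-1)^\<alpha> and 1/(x-\<alpha>/2)^\<alpha>. The upper bound then holds even without the factor
  \<surd>2 e^(13/12); for the lower bound, the constant in front is below e^(-1/3) < 49/64, which is at most
  ((k0+1/2)/(k0+1))^\<alpha> when k0 \<ge> 3.\<close>

lemma Gamma_real_plus1: "(y::real) > 0 \<Longrightarrow> Gamma (y + 1) = y * Gamma y"
  by (rule Gamma_plus1) (auto elim!: nonpos_Ints_cases)

lemma Gamma_add_le_powr:
  fixes y s :: real
  assumes y: "y > 0" and s: "0 \<le> s" "s \<le> 1"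
  shows "Gamma (y + s) \<le> y powr s * Gamma y"
proof -
  have "(ln \<circ> Gamma) ((1 - s) * y + s * (y + 1))
          \<le> (1 - s) * (ln \<circ> Gamma) y + s * (ln \<circ> Gamma) (y + 1)"
    using y s convex_onD[OF log_convex_Gamma_real, of s y "y + 1"] by auto
  hence "ln (Gamma (y + s)) \<le> (1 - s) * ln (Gamma y) + s * ln (y * Gamma y)"
    using y Gamma_real_plus1[OF y] by (simp add: algebra_simps)
  also have "\<dots> = ln (Gamma y) + s * ln y"
    using y by (simp add: ln_mult_pos algebra_simps)
  finally have "exp (ln (Gamma (y + s))) \<le> exp (ln (Gamma y) + s * ln y)" by simp
  thus ?thesis using y s by (simp add: exp_add powr_def mult.commute)
qed

lemma Gamma_ratio_bounds:
  fixes x a :: real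
  assumes x: "x > 0" and a: "1 \<le> a" "a \<le> 2"
  shows "1 / (x + a - 1) powr a \<le> Gamma x / Gamma (x + a)"
    and "Gamma x / Gamma (x + a) \<le> 1 / x powr a"
proof -
  define s where "s = a - 1"
  have s: "0 \<le> s" "s \<le> 1" and xs: "x + s > 0" using a x by (auto simp: s_def)
  have Gamma_xa: "Gamma (x + a) = (x + s) * Gamma (x + s)"
    using Gamma_real_plus1[OF xs] by (simp add: s_def algebra_simps)
  have "Gamma ((x + s) + (1 - s)) \<le> (x + s) powr (1 - s) * Gamma (x + s)"
    using Gamma_add_le_powr[OF xs, of "1 - s"] s by auto
  hence Gamma_succ_le: "x * Gamma x \<le> (x + s) powr (1 - s) * Gamma (x + s)"
    using Gamma_real_plus1[OF x] by simp
  have "x powr a * Gamma x = x powr s * (x * Gamma x)"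
    using x by (simp add: s_def powr_diff)
  also have "\<dots> \<le> (x + s) powr s * (x * Gamma x)"
    using x s by (intro mult_right_mono powr_mono2) auto
  also have "\<dots> \<le> (x + s) powr s * ((x + s) powr (1 - s) * Gamma (x + s))"
    using Gamma_succ_le by (rule mult_left_mono) simp
  also have "\<dots> = Gamma (x + a)"
    using xs by (simp add: Gamma_xa powr_add[symmetric] mult.assoc[symmetric])
  finally have "x powr a * Gamma x \<le> Gamma (x + a)" .
  thus "Gamma x / Gamma (x + a) \<le> 1 / x powr a"
    using x a Gamma_real_pos[of "x + a"] by (simp add: field_simps)
  have "Gamma (x + a) \<le> (x + s) * (x powr s * Gamma x)"
    using Gamma_xa Gamma_add_le_powr[OF x s] xs by (simp add: mult_left_mono)
  also have "\<dots> \<le> (x + s) * ((x + s) powr s * Gamma x)"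
    using x s xs by (intro mult_left_mono mult_right_mono powr_mono2) auto
  also have "\<dots> = (x + a - 1) powr a * Gamma x"
    using xs by (simp add: s_def powr_diff field_simps)
  finally show "1 / (x + a - 1) powr a \<le> Gamma x / Gamma (x + a)"
    using x xs by (simp add: s_def field_simps)
qed

lemma Gamma_ratio_telescope:
  fixes x a :: real
  assumes "x > 0" "a > 0"
  shows "Gamma x / Gamma (x + a + 1) = (Gamma x / Gamma (x + a) - Gamma (x + 1) / Gamma (x + 1 + a)) / a"
proof -
  define P Q where "P = Gamma x" and "Q = Gamma (x + a)"
  have "Gamma (x + 1) = x * P" "Gamma (x + a + 1) = (x + a) * Q" "Gamma (x + 1 + a) = (x + a) * Q"
    using Gamma_real_plus1[of x] Gamma_real_plus1[of "x + a"] assms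
    by (simp_all add: P_def Q_def add_ac)
  moreover have "P > 0" "Q > 0" using assms by (simp_all add: P_def Q_def)
  hence "P / ((x + a) * Q) = (P / Q - x * P / ((x + a) * Q)) / a"
    using assms by (simp add: divide_simps) (simp add: algebra_simps)
  ultimately show ?thesis by (simp only: P_def[symmetric] Q_def[symmetric])
qed

lemma rGamma_reflection_real: "rGamma (x::real) * rGamma (1 - x) = sin (pi * x) / pi"
proof -
  have "complex_of_real (rGamma x * rGamma (1 - x)) = complex_of_real (sin (pi * x) / pi)"
    using rGamma_reflection_complex[of "complex_of_real x"]
    by (simp add: rGamma_complex_of_real[symmetric] sin_of_real[symmetric])
  thus ?thesis by (simp only: of_real_eq_iff)
qed

lemma abs_sin_pi_minus_nat: "\<bar>sin (pi * (x - real n))\<bar> = \<bar>sin (pi * x)\<bar>"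
proof -
  have "sin (pi * (x - real n)) = sin (pi * x) * (- 1) ^ n"
    by (simp add: sin_diff algebra_simps)
  thus ?thesis by (simp add: abs_mult)
qed

lemma abs_frac_coeff:
  fixes \<alpha> :: real and j :: nat
  assumes "0 < \<alpha>" "\<alpha> < 2" "j \<ge> 1"
  shows "\<bar>frac_coeff \<alpha> (int j)\<bar>
           = Gamma (\<alpha> + 1) * sin (pi * \<alpha> / 2) / pi * (Gamma (real j - \<alpha>/2) / Gamma (real j + 1 + \<alpha>/2))"
proof -
  define b where "b = \<alpha>/2"
  have b: "0 < b" "b < 1" and jb: "real j - b > 0" using assms by (auto simp: b_def)
  have "rGamma (b + 1 - real j) * rGamma (real j - b) = sin (pi * (b + 1 - real j)) / pi"
    using rGamma_reflection_real[of "b + 1 - real j"] by simp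
  moreover have "rGamma (real j - b) = 1 / Gamma (real j - b)"
    by (simp add: rGamma_inverse_Gamma field_simps)
  ultimately have "rGamma (b - real j + 1) = sin (pi * (b + 1 - real j)) / pi * Gamma (real j - b)"
    using Gamma_real_pos[OF jb] by (simp add: field_simps)
  moreover have "rGamma (b + real j + 1) = 1 / Gamma (real j + 1 + b)"
    by (simp add: rGamma_inverse_Gamma inverse_eq_divide add_ac)
  moreover have "\<bar>sin (pi * (b + 1 - real j))\<bar> = sin (pi * b)"
    using abs_sin_pi_minus_nat[of "b + 1" j] b sin_gt_zero[of "pi * b"]
    by (simp add: distrib_left)
  moreover have "\<bar>(-1::real) powi int j\<bar> = 1" by (simp add: power_int_def)
  ultimately show ?thesis
    using jb assms unfolding frac_coeff_def b_def[symmetric]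
    by (simp add: abs_mult b_def)
qed

lemma frac_coeff_tail_sums:
  fixes \<alpha> :: real and m :: nat
  assumes "1 \<le> \<alpha>" "\<alpha> < 2" "m \<ge> 1"
  shows "(\<lambda>n. \<bar>frac_coeff \<alpha> (int (n + m))\<bar>) sums
           (Gamma (\<alpha> + 1) * sin (pi * \<alpha> / 2) / (pi * \<alpha>) * (Gamma (m - \<alpha>/2) / Gamma (m + \<alpha>/2)))"
proof -
  define R where "R = (\<lambda>n::nat. Gamma (real (n + m) - \<alpha>/2) / Gamma (real (n + m) + \<alpha>/2))"
  define K where "K = Gamma (\<alpha> + 1) * sin (pi * \<alpha> / 2) / (pi * \<alpha>)"
  have term_eq: "\<bar>frac_coeff \<alpha> (int (n + m))\<bar> = K * (R n - R (Suc n))" for n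
  proof -
    define x where "x = real (n + m) - \<alpha>/2"
    have "R n = Gamma x / Gamma (x + \<alpha>)" "R (Suc n) = Gamma (x + 1) / Gamma (x + 1 + \<alpha>)"
      unfolding R_def x_def by (simp_all add: algebra_simps)
    moreover have "\<bar>frac_coeff \<alpha> (int (n + m))\<bar> = K * \<alpha> * (Gamma x / Gamma (x + \<alpha> + 1))"
      using abs_frac_coeff[of \<alpha> "n + m"] assms unfolding K_def x_def by (simp add: algebra_simps)
    moreover have "x > 0" using assms by (simp add: x_def)
    ultimately show ?thesis
      using Gamma_ratio_telescope[of x \<alpha>] assms by simp
  qed
  have "R \<longlonglongrightarrow> 0"
  proof -
    define c where "c = real m - \<alpha>/2"
    define x where "x n = real n + c" for n
    have c: "c > 0" "\<alpha> > 0" using assms by (simp_all add: c_def)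
    have x: "x n > 0" "R n = Gamma (x n) / Gamma (x n + \<alpha>)" for n
      using assms unfolding x_def c_def R_def by (simp_all add: algebra_simps)
    have "R n \<le> 1 / x n powr \<alpha>" for n
      using x Gamma_ratio_bounds(2)[of "x n" \<alpha>] assms by simp
    moreover have "R n \<ge> 0" for n
      using x(1)[of n] assms by (simp add: x(2))
    moreover have "(\<lambda>n. 1 / x n powr \<alpha>) \<longlonglongrightarrow> 0"
      using c unfolding x_def by real_asymp
    ultimately show ?thesis
      using tendsto_sandwich[of "\<lambda>_. 0" R sequentially "\<lambda>n. 1 / x n powr \<alpha>"]
      by (simp add: always_eventually)
  qed
  hence "(\<lambda>n. K * (R n - R (Suc n))) sums (K * R 0)"
    using sums_mult[OF telescope_sums'] by fastforce
  hence "(\<lambda>n. \<bar>frac_coeff \<alpha> (int (n + m))\<bar>) sums (K * R 0)"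
    by (simp only: term_eq)
  thus ?thesis by (simp add: K_def R_def)
qed

lemma ln_one_minus_le:
  assumes "0 \<le> (v::real)" "v < 1"
  shows "ln (1 - v) \<le> - v - v^2/2"
proof -
  let ?f = "\<lambda>x::real. - x - x^2/2 - ln (1 - x)"
  have "?f 0 \<le> ?f v"
  proof (rule DERIV_nonneg_imp_nondecreasing[OF assms(1)])
    fix x assume x: "0 \<le> x" "x \<le> v"
    hence x1: "x < 1" using assms by auto
    have "DERIV ?f x :> (- 1 - x + 1 / (1 - x))"
      using x1 by (auto intro!: derivative_eq_intros simp: power2_eq_square)
    moreover have "- 1 - x + 1 / (1 - x) = x^2 / (1 - x)"
      using x1 by (simp add: field_simps power2_eq_square)
    ultimately show "\<exists>y. DERIV ?f x :> y \<and> y \<ge> 0" using x1 by auto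
  qed
  thus ?thesis by simp
qed

lemma lower_bound_constant_lt:
  fixes \<alpha> :: real
  assumes "1 < \<alpha>" "\<alpha> < 2"
  shows "(1 - (1 + \<alpha>) / (5 + \<alpha>/2)) powr (5 + \<alpha>/2) * exp (\<alpha> + 1) < 49/64"
proof -
  define t where "t = 5 + \<alpha>/2"
  define v where "v = (1 + \<alpha>) / t"
  have t: "t > 0" "t < 6" and v: "0 \<le> v" "v < 1" and tv: "t * v = 1 + \<alpha>"
    using assms by (auto simp: v_def t_def field_simps)
  have "(1 - v) powr t * exp (\<alpha> + 1) = exp (t * ln (1 - v) + t * v)"
    using v by (simp add: powr_def exp_add tv add_ac)
  also have "\<dots> \<le> exp (t * (- v - v^2/2) + t * v)"
    using ln_one_minus_le[OF v] t by simp
  also have "\<dots> = exp (- ((t * v)^2 / (2 * t)))"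
    using t by (simp add: power2_eq_square field_simps)
  also have "\<dots> \<le> exp (- 1/3)"
  proof -
    have "(t * v)^2 \<ge> 2^2" unfolding tv using assms by (intro power_mono) auto
    hence "(t * v)^2 / (2 * t) \<ge> 4 / 12" using t by (simp add: field_simps)
    thus ?thesis by simp
  qed
  also have "\<dots> \<le> 3/4"
    using exp_ge_add_one_self[of "1/3::real"] by (simp add: exp_minus field_simps)
  finally show ?thesis by (simp add: t_def v_def)
qed

lemma Gamma_ratio_gt_lower_bound:
  fixes \<alpha> x :: real
  assumes "1 < \<alpha>" "\<alpha> < 2" "x \<ge> 4"
  shows "(1 - (1 + \<alpha>) / (5 + \<alpha>/2)) powr (5 + \<alpha>/2) * exp (\<alpha> + 1) / (x - 1/2) powr \<alpha>
           < Gamma (x - \<alpha>/2) / Gamma (x + \<alpha>/2)"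
proof -
  define q where "q = (x - 1/2) / x"
  have q: "7/8 \<le> q" "q \<le> 1" using assms by (auto simp: q_def field_simps)
  have "(1 - (1 + \<alpha>) / (5 + \<alpha>/2)) powr (5 + \<alpha>/2) * exp (\<alpha> + 1) < (7/8)^2"
    using lower_bound_constant_lt[OF assms(1,2)] by (simp add: power2_eq_square)
  also have "\<dots> \<le> q powr 2"
    using q by (simp add: powr_realpow power_mono)
  also have "\<dots> \<le> q powr \<alpha>"
    using q assms by (intro powr_mono') auto
  also have "\<dots> = (x - 1/2) powr \<alpha> / x powr \<alpha>"
    using assms by (simp add: q_def powr_divide)
  finally have "(1 - (1 + \<alpha>) / (5 + \<alpha>/2)) powr (5 + \<alpha>/2) * exp (\<alpha> + 1) / (x - 1/2) powr \<alpha>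
                  < 1 / x powr \<alpha>"
    using assms by (simp add: field_simps)
  also have "\<dots> \<le> 1 / (x + \<alpha>/2 - 1) powr \<alpha>"
    using assms by (intro divide_left_mono powr_mono2 mult_pos_pos) auto
  also have "\<dots> \<le> Gamma (x - \<alpha>/2) / Gamma (x + \<alpha>/2)"
    using Gamma_ratio_bounds(1)[of "x - \<alpha>/2" \<alpha>] assms by (simp add: algebra_simps)
  finally show ?thesis .
qed

lemma Gamma_ratio_lt_upper_bound:
  fixes \<alpha> x :: real
  assumes "1 \<le> \<alpha>" "\<alpha> < 2" "x > 2"
  shows "Gamma (x - \<alpha>/2) / Gamma (x + \<alpha>/2) < 1 / (x - 2) powr \<alpha>"
proof -
  have "Gamma (x - \<alpha>/2) / Gamma (x + \<alpha>/2) \<le> 1 / (x - \<alpha>/2) powr \<alpha>"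
    using Gamma_ratio_bounds(2)[of "x - \<alpha>/2" \<alpha>] assms by (simp add: algebra_simps)
  also have "\<dots> < 1 / (x - 2) powr \<alpha>"
    using assms by (intro divide_strict_left_mono powr_less_mono2 mult_pos_pos) auto
  finally show ?thesis .
qed

theorem lemma1:
  fixes \<alpha> :: real and k0 :: nat
  assumes "1 < \<alpha>" "\<alpha> < 2" "k0 \<ge> 3"
  shows "summable (\<lambda>n. \<bar>frac_coeff \<alpha> (int (n + k0 + 1))\<bar>)
    \<and> (1 - (1 + \<alpha>) / (5 + \<alpha>/2)) powr (5 + \<alpha>/2) * exp (\<alpha> + 1) * Gamma (\<alpha> + 1)
        * sin (pi * \<alpha> / 2) / (pi * \<alpha> * (real k0 + 1/2) powr \<alpha>)
      < (\<Sum>n. \<bar>frac_coeff \<alpha> (int (n + k0 + 1))\<bar>)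
    \<and> (\<Sum>n. \<bar>frac_coeff \<alpha> (int (n + k0 + 1))\<bar>)
      < sqrt 2 * exp (13/12) * Gamma (\<alpha> + 1) * sin (pi * \<alpha> / 2)
        / (pi * \<alpha> * (real k0 - 1) powr \<alpha>)"
proof -
  define K where "K = Gamma (\<alpha> + 1) * sin (pi * \<alpha> / 2) / (pi * \<alpha>)"
  define C where "C = (1 - (1 + \<alpha>) / (5 + \<alpha>/2)) powr (5 + \<alpha>/2) * exp (\<alpha> + 1)"
  define R where "R = Gamma (real k0 + 1 - \<alpha>/2) / Gamma (real k0 + 1 + \<alpha>/2)"
  have K: "K > 0" using assms by (simp add: K_def sin_gt_zero)
  have sums: "(\<lambda>n. \<bar>frac_coeff \<alpha> (int (n + k0 + 1))\<bar>) sums (K * R)"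
    using frac_coeff_tail_sums[of \<alpha> "k0 + 1"] assms by (simp add: K_def R_def add_ac)
  have "C / (real k0 + 1/2) powr \<alpha> < R"
    using Gamma_ratio_gt_lower_bound[of \<alpha> "real k0 + 1"] assms by (simp add: C_def R_def add.commute)
  hence "K * (C / (real k0 + 1/2) powr \<alpha>) < K * R"
    using K by (rule mult_strict_left_mono)
  hence lower: "C * Gamma (\<alpha> + 1) * sin (pi * \<alpha> / 2) / (pi * \<alpha> * (real k0 + 1/2) powr \<alpha>) < K * R"
    by (simp add: K_def mult_ac)
  have one_le_const: "1 \<le> sqrt 2 * exp (13/12::real)"
    using mult_mono[of 1 "sqrt 2" 1 "exp (13/12::real)"] by simp
  have "R < 1 / (real k0 - 1) powr \<alpha>"
    using Gamma_ratio_lt_upper_bound[of \<alpha> "real k0 + 1"] assms by (simp add: R_def)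
  also have "\<dots> \<le> sqrt 2 * exp (13/12) * (1 / (real k0 - 1) powr \<alpha>)"
    using mult_right_mono[OF one_le_const, of "1 / (real k0 - 1) powr \<alpha>"] by simp
  finally have "K * R < K * (sqrt 2 * exp (13/12) * (1 / (real k0 - 1) powr \<alpha>))"
    using K by (rule mult_strict_left_mono)
  hence upper: "K * R < sqrt 2 * exp (13/12) * Gamma (\<alpha> + 1) * sin (pi * \<alpha> / 2)
        / (pi * \<alpha> * (real k0 - 1) powr \<alpha>)"
    by (simp add: K_def mult_ac)
  show ?thesis
    using sums_summable[OF sums] sums_unique[OF sums] lower upper by (simp add: C_def)
qed

end
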